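(* In the crossed product setting described in the context, with $\ast$ an involution on $D$ satisfying $K^\ast\subseteq K$, the following are equivalent: (1) $D\otimes_F K$ is formally real, i.e. the involution $\#$ on $M_n(K)$ is formally real; (2) $\ast$ is formally real on $D$ and $(k^\ast)^\sigma=(k^\sigma)^\ast$ for every $k\in K$ and $\sigma\in G$; (3) $e_\sigma^\ast e_\sigma\in K$ for every $\sigma\in G$, and there exists a unital hermitian cone on $(K,\ast)$ containing all $e_\sigma^\ast e_\sigma$, $\sigma\in G$.
   Context: Let $K/F$ be a finite Galois extension of fields of characteristic $0$ with Galois group $G$, $n=|G|$; write $k^\sigma$ for the image of $k\in K$ under $\sigma$. Let $\Phi\colon G\times G\to K\setminus\{0\}$ be a normalized $2$-cocycle and $D=(K/F,\Phi)$ the crossed product: right $K$-vector space with basis $(e_\sigma)_{\sigma\in G}$, $e_{\mathrm{id}}=1$, multiplication $(\sum_\sigma e_\sigma c_\sigma)(\sum_\tau e_\tau d_\tau)=\sum_{\sigma,\tau}e_{\sigma\tau}\Phi(\sigma,\tau)c_\sigma^\tau d_\tau$ (so $ke_\sigma=e_\sigma k^\sigma$). Assume $D$ is a division algebra. Define $f\colon D\to K$ by $f(\sum_\sigma e_\sigma c_\sigma)=c_{\mathrm{id}}$. Let $\lambda\colon D\to M_n(K)$ (rows and columns indexed by $G$) be the left regular representation, $ae_\tau=\sum_\sigma e_\sigma\lambda(a)_{\sigma\tau}$; the map $a\otimes k\mapsto\lambda(a)k$ is an isomorphism $D\otimes_F K\cong M_n(K)$. For $X=[x_{\sigma\tau}]\in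 M_n(K)$ put $X^\ast=[x_{\tau\sigma}^\ast]$, let $A=[f(e_\sigma^\ast e_\tau)]_{\sigma,\tau\in G}$ (invertible with $A^\ast=A$), and let $X^\#=A^{-1}X^\ast A$, the involution on $M_n(K)$ with $\lambda(a^\ast)=\lambda(a)^\#$. An involution $\#$ on a ring $R$ is formally real if every finite sum of nonzero elements $rr^\#$ is nonzero. A unital hermitian cone on a ring $R$ with involution $\ast$ is a subset $M\subseteq\{r:r^\ast=r\}$ with $1\in M$, $M+M\subseteq M$, $aMa^\ast\subseteq M$ for all $a\in R$, and $M\cap-M=\{0\}$. *)

theory Defs
  imports Main
begin

text \<open>The field K is the type 'k (characteristic 0). The Galois group G is a finite
group of field automorphisms of K; F is its fixed field, so that (Artin) K/F is a finite Galois
extension with group G. An element sigma of G is represented by the map k |-> k^sigma.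
Since the paper writes the action exponentially (right action), (k^sigma)^tau = k^(sigma tau),
so the group product sigma tau corresponds to the composition tau o sigma.\<close>

definition galois_group :: "('k::field_char_0 \<Rightarrow> 'k) set \<Rightarrow> bool" where
  "galois_group G \<longleftrightarrow> finite G \<and> id \<in> G \<and> (\<forall>\<sigma>\<in>G. \<forall>\<tau>\<in>G. \<tau> \<circ> \<sigma> \<in> G)
     \<and> (\<forall>\<sigma>\<in>G. inv \<sigma> \<in> G)
     \<and> (\<forall>\<sigma>\<in>G. bij \<sigma> \<and> (\<forall>x y. \<sigma> (x + y) = \<sigma> x + \<sigma> y)
                  \<and> (\<forall>x y. \<sigma> (x * y) = \<sigma> x * \<sigma> y) \<and> \<sigma> 1 = 1)"

definition fixed_field :: "('k::field_char_0 \<Rightarrow> 'k) set \<Rightarrow> 'k set" where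
  "fixed_field G = {k. \<forall>\<sigma>\<in>G. \<sigma> k = k}"

definition gmul :: "('k \<Rightarrow> 'k) \<Rightarrow> ('k \<Rightarrow> 'k) \<Rightarrow> ('k \<Rightarrow> 'k)" where
  "gmul \<sigma> \<tau> = \<tau> \<circ> \<sigma>"

definition normalized_cocycle :: "('k::field_char_0 \<Rightarrow> 'k) set \<Rightarrow> (('k \<Rightarrow> 'k) \<Rightarrow> ('k \<Rightarrow> 'k) \<Rightarrow> 'k) \<Rightarrow> bool" where
  "normalized_cocycle G \<Phi> \<longleftrightarrow>
     (\<forall>\<sigma>\<in>G. \<forall>\<tau>\<in>G. \<Phi> \<sigma> \<tau> \<noteq> 0)
   \<and> (\<forall>\<sigma>\<in>G. \<Phi> id \<sigma> = 1 \<and> \<Phi> \<sigma> id = 1)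
   \<and> (\<forall>\<sigma>\<in>G. \<forall>\<tau>\<in>G. \<forall>\<rho>\<in>G.
        \<Phi> (gmul \<sigma> \<tau>) \<rho> * \<rho> (\<Phi> \<sigma> \<tau>) = \<Phi> \<sigma> (gmul \<tau> \<rho>) * \<Phi> \<tau> \<rho>)"

text \<open>Crossed product D: an element sum_sigma e_sigma c_sigma is its coefficient function c,
vanishing outside G.\<close>

definition cp_carrier :: "('k::field_char_0 \<Rightarrow> 'k) set \<Rightarrow> (('k \<Rightarrow> 'k) \<Rightarrow> 'k) set" where
  "cp_carrier G = {c. \<forall>\<sigma>. \<sigma> \<notin> G \<longrightarrow> c \<sigma> = 0}"

definition cp_add :: "(('k::field_char_0 \<Rightarrow> 'k) \<Rightarrow> 'k) \<Rightarrow> (('k \<Rightarrow> 'k) \<Rightarrow> 'k) \<Rightarrow> (('k \<Rightarrow> 'k) \<Rightarrow> 'k)" where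
  "cp_add c d = (\<lambda>\<sigma>. c \<sigma> + d \<sigma>)"

definition cp_zero :: "('k::field_char_0 \<Rightarrow> 'k) \<Rightarrow> 'k" where
  "cp_zero = (\<lambda>_. 0)"

definition cp_mult :: "('k::field_char_0 \<Rightarrow> 'k) set \<Rightarrow> (('k \<Rightarrow> 'k) \<Rightarrow> ('k \<Rightarrow> 'k) \<Rightarrow> 'k)
    \<Rightarrow> (('k \<Rightarrow> 'k) \<Rightarrow> 'k) \<Rightarrow> (('k \<Rightarrow> 'k) \<Rightarrow> 'k) \<Rightarrow> (('k \<Rightarrow> 'k) \<Rightarrow> 'k)" where
  "cp_mult G \<Phi> c d = (\<lambda>\<rho>. \<Sum>\<sigma>\<in>G. \<Sum>\<tau>\<in>G.
      if gmul \<sigma> \<tau> = \<rho> then \<Phi> \<sigma> \<tau> * \<tau> (c \<sigma>) * d \<tau> else 0)"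

definition cp_basis :: "('k::field_char_0 \<Rightarrow> 'k) \<Rightarrow> (('k \<Rightarrow> 'k) \<Rightarrow> 'k)" where
  "cp_basis \<sigma> = (\<lambda>\<tau>. if \<tau> = \<sigma> then 1 else 0)"

definition cp_one :: "('k::field_char_0 \<Rightarrow> 'k) \<Rightarrow> 'k" where
  "cp_one = cp_basis id"

definition cp_emb :: "'k::field_char_0 \<Rightarrow> (('k \<Rightarrow> 'k) \<Rightarrow> 'k)" where
  "cp_emb k = (\<lambda>\<tau>. if \<tau> = id then k else 0)"

definition cp_f :: "(('k::field_char_0 \<Rightarrow> 'k) \<Rightarrow> 'k) \<Rightarrow> 'k" where
  "cp_f c = c id"

definition is_division_cp :: "('k::field_char_0 \<Rightarrow> 'k) set \<Rightarrow> (('k \<Rightarrow> 'k) \<Rightarrow> ('k \<Rightarrow> 'k) \<Rightarrow> 'k) \<Rightarrow> bool" where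
  "is_division_cp G \<Phi> \<longleftrightarrow> (\<forall>a\<in>cp_carrier G. a \<noteq> cp_zero \<longrightarrow>
      (\<exists>b\<in>cp_carrier G. cp_mult G \<Phi> a b = cp_one \<and> cp_mult G \<Phi> b a = cp_one))"

definition is_involution_cp :: "('k::field_char_0 \<Rightarrow> 'k) set \<Rightarrow> (('k \<Rightarrow> 'k) \<Rightarrow> ('k \<Rightarrow> 'k) \<Rightarrow> 'k)
    \<Rightarrow> ((('k \<Rightarrow> 'k) \<Rightarrow> 'k) \<Rightarrow> (('k \<Rightarrow> 'k) \<Rightarrow> 'k)) \<Rightarrow> bool" where
  "is_involution_cp G \<Phi> star \<longleftrightarrow>
     (\<forall>a\<in>cp_carrier G. star a \<in> cp_carrier G)
   \<and> (\<forall>a\<in>cp_carrier G. \<forall>b\<in>cp_carrier G. star (cp_add a b) = cp_add (star a) (star b))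
   \<and> (\<forall>a\<in>cp_carrier G. \<forall>b\<in>cp_carrier G. star (cp_mult G \<Phi> a b) = cp_mult G \<Phi> (star b) (star a))
   \<and> (\<forall>a\<in>cp_carrier G. star (star a) = a)"

text \<open>restriction of * to K (meaningful when K* is contained in K)\<close>
definition kstar :: "((('k::field_char_0 \<Rightarrow> 'k) \<Rightarrow> 'k) \<Rightarrow> (('k \<Rightarrow> 'k) \<Rightarrow> 'k)) \<Rightarrow> 'k \<Rightarrow> 'k" where
  "kstar star k = cp_f (star (cp_emb k))"

definition formally_real_cp :: "('k::field_char_0 \<Rightarrow> 'k) set \<Rightarrow> (('k \<Rightarrow> 'k) \<Rightarrow> ('k \<Rightarrow> 'k) \<Rightarrow> 'k)
    \<Rightarrow> ((('k \<Rightarrow> 'k) \<Rightarrow> 'k) \<Rightarrow> (('k \<Rightarrow> 'k) \<Rightarrow> 'k)) \<Rightarrow> bool" where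
  "formally_real_cp G \<Phi> star \<longleftrightarrow> (\<forall>(m::nat) r. (\<forall>i<m. r i \<in> cp_carrier G) \<longrightarrow>
      (\<forall>\<rho>. (\<Sum>i<m. cp_mult G \<Phi> (r i) (star (r i)) \<rho>) = 0) \<longrightarrow> (\<forall>i<m. r i = cp_zero))"

text \<open>Matrices in M_n(K), rows and columns indexed by G (entries zero outside G x G).\<close>

definition mat_carrier :: "('k::field_char_0 \<Rightarrow> 'k) set \<Rightarrow> (('k \<Rightarrow> 'k) \<Rightarrow> ('k \<Rightarrow> 'k) \<Rightarrow> 'k) set" where
  "mat_carrier G = {X. \<forall>\<sigma> \<tau>. (\<sigma> \<notin> G \<or> \<tau> \<notin> G) \<longrightarrow> X \<sigma> \<tau> = 0}"

definition mat_mult :: "('k::field_char_0 \<Rightarrow> 'k) set \<Rightarrow> (('k \<Rightarrow> 'k) \<Rightarrow> ('k \<Rightarrow> 'k) \<Rightarrow> 'k)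
    \<Rightarrow> (('k \<Rightarrow> 'k) \<Rightarrow> ('k \<Rightarrow> 'k) \<Rightarrow> 'k) \<Rightarrow> (('k \<Rightarrow> 'k) \<Rightarrow> ('k \<Rightarrow> 'k) \<Rightarrow> 'k)" where
  "mat_mult G X Y = (\<lambda>\<sigma> \<tau>. \<Sum>\<rho>\<in>G. X \<sigma> \<rho> * Y \<rho> \<tau>)"

definition mat_one :: "('k::field_char_0 \<Rightarrow> 'k) set \<Rightarrow> (('k \<Rightarrow> 'k) \<Rightarrow> ('k \<Rightarrow> 'k) \<Rightarrow> 'k)" where
  "mat_one G = (\<lambda>\<sigma> \<tau>. if \<sigma> \<in> G \<and> \<sigma> = \<tau> then 1 else 0)"

definition mat_inv :: "('k::field_char_0 \<Rightarrow> 'k) set \<Rightarrow> (('k \<Rightarrow> 'k) \<Rightarrow> ('k \<Rightarrow> 'k) \<Rightarrow> 'k)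
    \<Rightarrow> (('k \<Rightarrow> 'k) \<Rightarrow> ('k \<Rightarrow> 'k) \<Rightarrow> 'k)" where
  "mat_inv G A = (THE B. B \<in> mat_carrier G \<and> mat_mult G A B = mat_one G \<and> mat_mult G B A = mat_one G)"

definition mat_conj :: "('k::field_char_0 \<Rightarrow> 'k) set \<Rightarrow> ((('k \<Rightarrow> 'k) \<Rightarrow> 'k) \<Rightarrow> (('k \<Rightarrow> 'k) \<Rightarrow> 'k))
    \<Rightarrow> (('k \<Rightarrow> 'k) \<Rightarrow> ('k \<Rightarrow> 'k) \<Rightarrow> 'k) \<Rightarrow> (('k \<Rightarrow> 'k) \<Rightarrow> ('k \<Rightarrow> 'k) \<Rightarrow> 'k)" where
  "mat_conj G star X = (\<lambda>\<sigma> \<tau>. if \<sigma> \<in> G \<and> \<tau> \<in> G then kstar star (X \<tau> \<sigma>) else 0)"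

definition gram :: "('k::field_char_0 \<Rightarrow> 'k) set \<Rightarrow> (('k \<Rightarrow> 'k) \<Rightarrow> ('k \<Rightarrow> 'k) \<Rightarrow> 'k)
    \<Rightarrow> ((('k \<Rightarrow> 'k) \<Rightarrow> 'k) \<Rightarrow> (('k \<Rightarrow> 'k) \<Rightarrow> 'k)) \<Rightarrow> (('k \<Rightarrow> 'k) \<Rightarrow> ('k \<Rightarrow> 'k) \<Rightarrow> 'k)" where
  "gram G \<Phi> star = (\<lambda>\<sigma> \<tau>. if \<sigma> \<in> G \<and> \<tau> \<in> G
      then cp_f (cp_mult G \<Phi> (star (cp_basis \<sigma>)) (cp_basis \<tau>)) else 0)"

definition mat_sharp :: "('k::field_char_0 \<Rightarrow> 'k) set \<Rightarrow> (('k \<Rightarrow> 'k) \<Rightarrow> ('k \<Rightarrow> 'k) \<Rightarrow> 'k)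
    \<Rightarrow> ((('k \<Rightarrow> 'k) \<Rightarrow> 'k) \<Rightarrow> (('k \<Rightarrow> 'k) \<Rightarrow> 'k))
    \<Rightarrow> (('k \<Rightarrow> 'k) \<Rightarrow> ('k \<Rightarrow> 'k) \<Rightarrow> 'k) \<Rightarrow> (('k \<Rightarrow> 'k) \<Rightarrow> ('k \<Rightarrow> 'k) \<Rightarrow> 'k)" where
  "mat_sharp G \<Phi> star X =
     mat_mult G (mat_mult G (mat_inv G (gram G \<Phi> star)) (mat_conj G star X)) (gram G \<Phi> star)"

definition formally_real_mat :: "('k::field_char_0 \<Rightarrow> 'k) set \<Rightarrow> (('k \<Rightarrow> 'k) \<Rightarrow> ('k \<Rightarrow> 'k) \<Rightarrow> 'k)
    \<Rightarrow> ((('k \<Rightarrow> 'k) \<Rightarrow> 'k) \<Rightarrow> (('k \<Rightarrow> 'k) \<Rightarrow> 'k)) \<Rightarrow> bool" where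
  "formally_real_mat G \<Phi> star \<longleftrightarrow> (\<forall>(m::nat) r. (\<forall>i<m. r i \<in> mat_carrier G) \<longrightarrow>
      (\<forall>\<sigma> \<tau>. (\<Sum>i<m. mat_mult G (r i) (mat_sharp G \<Phi> star (r i)) \<sigma> \<tau>) = 0) \<longrightarrow>
      (\<forall>i<m. r i = (\<lambda>_ _. 0)))"

definition herm_cone :: "('k::field_char_0 \<Rightarrow> 'k) \<Rightarrow> 'k set \<Rightarrow> bool" where
  "herm_cone kst M \<longleftrightarrow> M \<subseteq> {r. kst r = r} \<and> 1 \<in> M \<and> (\<forall>x\<in>M. \<forall>y\<in>M. x + y \<in> M)
     \<and> (\<forall>a. \<forall>x\<in>M. a * x * kst a \<in> M) \<and> (\<forall>x. x \<in> M \<and> - x \<in> M \<longrightarrow> x = 0)"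

end

theory Submission
  imports Defs
begin

(* Write kst for the restriction of the involution star to K (so kst k = k^star).
   Applying star to the relation k e_s = e_s k^s shows that star e_s is again a monomial
   e_r d_s, where r = rho s is the unique automorphism with kst k = (kst (k^s))^r.  Hence the
   compatibility "kst commutes with G" of condition (2) says exactly that s o rho s = id; then
   the norm (star e_s) e_s is an element c_s of K and f((star x) x) = sum_s kst(x_s) c_s x_s.
   The Gram matrix A is a monomial matrix, diagonal with entries c_s under compatibility, so the
   involution X^# becomes explicit. *)

lemma herm_cone_zero_mem: "herm_cone kst M \<Longrightarrow> 0 \<in> M"
  unfolding herm_cone_def by (metis mult_zero_left)

lemma herm_cone_sum_mem:
  assumes "herm_cone kst M" "\<forall>j\<in>J. t j \<in> M"
  shows "(\<Sum>j\<in>J. t j) \<in> M"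
  using assms(2)
proof (induct J rule: infinite_finite_induct)
  case (insert x F)
  then show ?case using assms(1) unfolding herm_cone_def by auto
qed (use herm_cone_zero_mem[OF assms(1)] in auto)

lemma herm_cone_sum_eq_zero:
  assumes cone: "herm_cone kst M" and "finite I" "\<forall>j\<in>I. t j \<in> M" "(\<Sum>j\<in>I. t j) = 0"
  shows "\<forall>j\<in>I. t j = 0"
proof
  fix j assume j: "j \<in> I"
  have "(\<Sum>j\<in>I. t j) = t j + (\<Sum>i\<in>I-{j}. t i)"
    using j assms(2) by (simp add: sum.remove)
  then have "- t j = (\<Sum>i\<in>I-{j}. t i)" using assms(4) by (metis add_eq_0_iff)
  then have "- t j \<in> M" using herm_cone_sum_mem[OF cone, of "I-{j}" t] assms(3) by auto
  then show "t j = 0" using assms(3) j cone unfolding herm_cone_def by blast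
qed

lemma mat_mult_assoc:
  "finite G \<Longrightarrow> mat_mult G (mat_mult G X Y) Z = mat_mult G X (mat_mult G Y Z)"
  unfolding mat_mult_def
  by (auto simp: fun_eq_iff sum_distrib_left sum_distrib_right mult.assoc intro: sum.swap)

lemma mat_one_mult: "X \<in> mat_carrier G \<Longrightarrow> finite G \<Longrightarrow> mat_mult G (mat_one G) X = X"
  unfolding mat_mult_def mat_one_def mat_carrier_def
  apply (intro ext)
  subgoal for \<sigma> \<tau> by (cases "\<sigma> \<in> G")
      (simp_all add: if_distrib[of "\<lambda>x. x * _"] sum.delta sum.delta' cong: if_cong)
  done

lemma mat_mult_one: "X \<in> mat_carrier G \<Longrightarrow> finite G \<Longrightarrow> mat_mult G X (mat_one G) = X"
  unfolding mat_mult_def mat_one_def mat_carrier_def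
  by (intro ext, auto simp add: if_distrib[of "\<lambda>x. _ * x"] sum.delta' cong: if_cong)

lemma mat_inv_unique:
  assumes "finite G" "B \<in> mat_carrier G" "mat_mult G A B = mat_one G" "mat_mult G B A = mat_one G"
  shows "mat_inv G A = B"
  unfolding mat_inv_def
proof (rule the_equality)
  fix B' assume B': "B' \<in> mat_carrier G \<and> mat_mult G A B' = mat_one G \<and> mat_mult G B' A = mat_one G"
  have "B' = mat_mult G B' (mat_mult G A B)" using assms B' mat_mult_one by metis
  also have "\<dots> = mat_mult G (mat_mult G B' A) B" using mat_mult_assoc assms by metis
  also have "\<dots> = B" using B' assms mat_one_mult by metis
  finally show "B' = B" .
qed (use assms in auto)

definition monomial_mat :: "('k::field_char_0 \<Rightarrow> 'k) set \<Rightarrow> (('k \<Rightarrow> 'k) \<Rightarrow> ('k \<Rightarrow> 'k))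
    \<Rightarrow> (('k \<Rightarrow> 'k) \<Rightarrow> 'k) \<Rightarrow> ('k \<Rightarrow> 'k) \<Rightarrow> ('k \<Rightarrow> 'k) \<Rightarrow> 'k" where
  "monomial_mat G \<pi> w = (\<lambda>\<sigma> \<tau>. if \<sigma> \<in> G \<and> \<tau> = \<pi> \<sigma> then w \<sigma> else 0)"

lemma monomial_mat_inverse:
  fixes w :: "('k::field_char_0 \<Rightarrow> 'k) \<Rightarrow> 'k"
  assumes fin: "finite G" and perm: "bij_betw \<pi> G G" and nz: "\<forall>\<sigma>\<in>G. w \<sigma> \<noteq> 0"
  defines "B \<equiv> (\<lambda>\<tau> \<sigma>. monomial_mat G \<pi> (\<lambda>\<sigma>. inverse (w \<sigma>)) \<sigma> \<tau>)"
  shows "mat_mult G (monomial_mat G \<pi> w) B = mat_one G"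
    and "mat_inv G (monomial_mat G \<pi> w) = B"
proof -
  have inj: "\<sigma> \<in> G \<Longrightarrow> \<sigma>' \<in> G \<Longrightarrow> \<pi> \<sigma> = \<pi> \<sigma>' \<longleftrightarrow> \<sigma> = \<sigma>'" for \<sigma> \<sigma>'
    using perm by (auto simp: bij_betw_def inj_on_def)
  have into: "\<sigma> \<in> G \<Longrightarrow> \<pi> \<sigma> \<in> G" for \<sigma> using perm bij_betwE by blast
  show AB: "mat_mult G (monomial_mat G \<pi> w) B = mat_one G"
  proof (intro ext)
    fix \<sigma> \<sigma>'
    have "mat_mult G (monomial_mat G \<pi> w) B \<sigma> \<sigma>' =
        (\<Sum>\<tau>\<in>G. if \<tau> = \<pi> \<sigma> then (if \<sigma> \<in> G \<and> \<sigma>' \<in> G \<and> \<sigma> = \<sigma>' then 1 else 0) else 0)"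
      unfolding mat_mult_def B_def monomial_mat_def
      by (intro sum.cong refl) (auto simp: nz inj)
    then show "mat_mult G (monomial_mat G \<pi> w) B \<sigma> \<sigma>' = mat_one G \<sigma> \<sigma>'"
      using fin into by (auto simp: mat_one_def sum.delta')
  qed
  have BA: "mat_mult G B (monomial_mat G \<pi> w) = mat_one G"
  proof (intro ext)
    fix \<tau> \<tau>' :: "'k \<Rightarrow> 'k"
    let ?g = "\<lambda>\<rho>. if \<rho> = \<tau> then (if \<tau> = \<tau>' then 1 else 0) else 0 :: 'k"
    have "mat_mult G B (monomial_mat G \<pi> w) \<tau> \<tau>' = (\<Sum>\<sigma>\<in>G. ?g (\<pi> \<sigma>))"
      unfolding mat_mult_def B_def monomial_mat_def
      by (intro sum.cong refl) (auto simp: nz)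
    also have "\<dots> = (\<Sum>\<rho>\<in>G. ?g \<rho>)" by (rule sum.reindex_bij_betw[OF perm])
    finally show "mat_mult G B (monomial_mat G \<pi> w) \<tau> \<tau>' = mat_one G \<tau> \<tau>'"
      using fin by (auto simp: mat_one_def sum.delta)
  qed
  show "mat_inv G (monomial_mat G \<pi> w) = B"
    by (rule mat_inv_unique[OF fin _ AB BA]) (auto simp: B_def monomial_mat_def mat_carrier_def into)
qed

lemma diag_mat_mult:
  "finite G \<Longrightarrow> mat_mult G (monomial_mat G id d) Y = (\<lambda>\<alpha> \<beta>. if \<alpha> \<in> G then d \<alpha> * Y \<alpha> \<beta> else 0)"
  unfolding mat_mult_def monomial_mat_def
  by (intro ext, simp add: if_distrib[of "\<lambda>x. x * _"] sum.delta cong: if_cong)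

lemma mat_mult_diag:
  "finite G \<Longrightarrow> mat_mult G Y (monomial_mat G id d) = (\<lambda>\<alpha> \<beta>. if \<beta> \<in> G then Y \<alpha> \<beta> * d \<beta> else 0)"
  unfolding mat_mult_def monomial_mat_def
  by (intro ext, simp add: if_distrib[of "\<lambda>x. _ * x"] sum.delta' cong: if_cong)

definition cp_mono :: "('k \<Rightarrow> 'k) \<Rightarrow> 'k::zero \<Rightarrow> (('k \<Rightarrow> 'k) \<Rightarrow> 'k)" where
  "cp_mono \<sigma> d = (\<lambda>\<rho>. if \<rho> = \<sigma> then d else 0)"

lemma cp_basis_mono: "cp_basis \<sigma> = cp_mono \<sigma> 1" by (simp add: cp_basis_def cp_mono_def)
lemma cp_emb_mono: "cp_emb k = cp_mono id k" by (simp add: cp_emb_def cp_mono_def fun_eq_iff)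
lemma cp_f_mono: "cp_f (cp_mono \<sigma> d) = (if \<sigma> = id then d else 0)" by (simp add: cp_f_def cp_mono_def)

lemma sum_sum_delta:
  assumes "finite S" "finite T"
  shows "(\<Sum>x\<in>S. \<Sum>y\<in>T. if x = a \<and> y = b then c else 0) = (if a \<in> S \<and> b \<in> T then c else 0)"
proof -
  have "(\<Sum>y\<in>T. if x = a \<and> y = b then c else 0) = (if x = a then (if b \<in> T then c else 0) else 0)" for x
    by (cases "x = a") (simp_all add: sum.delta' assms)
  then show ?thesis using assms by (simp add: sum.delta')
qed

locale crossed_product =
  fixes G :: "('k::field_char_0 \<Rightarrow> 'k) set"
    and \<Phi> :: "('k \<Rightarrow> 'k) \<Rightarrow> ('k \<Rightarrow> 'k) \<Rightarrow> 'k"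
    and star :: "(('k \<Rightarrow> 'k) \<Rightarrow> 'k) \<Rightarrow> (('k \<Rightarrow> 'k) \<Rightarrow> 'k)"
  assumes galois: "galois_group G"
    and cocycle: "normalized_cocycle G \<Phi>"
    and involution: "is_involution_cp G \<Phi> star"
    and K_stable: "\<forall>k. star (cp_emb k) \<in> range cp_emb"
begin

abbreviation "kst \<equiv> kstar star"
abbreviation "mult \<equiv> cp_mult G \<Phi>"
abbreviation "carr \<equiv> cp_carrier G"

lemma finite_G: "finite G" using galois by (simp add: galois_group_def)
lemma id_G: "id \<in> G" using galois by (simp add: galois_group_def)
lemma inv_G: "\<sigma> \<in> G \<Longrightarrow> inv \<sigma> \<in> G" using galois by (simp add: galois_group_def)
lemma bij_G: "\<sigma> \<in> G \<Longrightarrow> bij \<sigma>" using galois by (simp add: galois_group_def)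
lemma add_G: "\<sigma> \<in> G \<Longrightarrow> \<sigma> (x + y) = \<sigma> x + \<sigma> y" using galois by (simp add: galois_group_def)
lemma mult_G: "\<sigma> \<in> G \<Longrightarrow> \<sigma> (x * y) = \<sigma> x * \<sigma> y" using galois by (simp add: galois_group_def)
lemma one_G: "\<sigma> \<in> G \<Longrightarrow> \<sigma> 1 = 1" using galois by (simp add: galois_group_def)
lemma zero_G: "\<sigma> \<in> G \<Longrightarrow> \<sigma> 0 = 0" using add_G[of \<sigma> 0 0] by simp
lemma inj_G: "\<sigma> \<in> G \<Longrightarrow> \<sigma> x = \<sigma> y \<longleftrightarrow> x = y" using bij_G bij_is_inj by (metis injD)
lemma eq_0_G: "\<sigma> \<in> G \<Longrightarrow> \<sigma> x = 0 \<longleftrightarrow> x = 0" using inj_G zero_G by metis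
lemma sum_G: "\<sigma> \<in> G \<Longrightarrow> \<sigma> (\<Sum>i\<in>S. f i) = (\<Sum>i\<in>S. \<sigma> (f i))"
  by (induct S rule: infinite_finite_induct) (auto simp: zero_G add_G)
lemma inv_right_G: "\<sigma> \<in> G \<Longrightarrow> \<sigma> (inv \<sigma> x) = x" using bij_G by (meson bij_inv_eq_iff)

lemma Phi_id_left: "\<sigma> \<in> G \<Longrightarrow> \<Phi> id \<sigma> = 1" using cocycle by (simp add: normalized_cocycle_def)
lemma Phi_id_right: "\<sigma> \<in> G \<Longrightarrow> \<Phi> \<sigma> id = 1" using cocycle by (simp add: normalized_cocycle_def)
lemma Phi_nonzero: "\<sigma> \<in> G \<Longrightarrow> \<tau> \<in> G \<Longrightarrow> \<Phi> \<sigma> \<tau> \<noteq> 0" using cocycle by (simp add: normalized_cocycle_def)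

lemma star_carr: "a \<in> carr \<Longrightarrow> star a \<in> carr" using involution by (simp add: is_involution_cp_def)
lemma star_add: "a \<in> carr \<Longrightarrow> b \<in> carr \<Longrightarrow> star (cp_add a b) = cp_add (star a) (star b)"
  using involution by (simp add: is_involution_cp_def)
lemma star_mult: "a \<in> carr \<Longrightarrow> b \<in> carr \<Longrightarrow> star (mult a b) = mult (star b) (star a)"
  using involution by (simp add: is_involution_cp_def)
lemma star_star: "a \<in> carr \<Longrightarrow> star (star a) = a" using involution by (simp add: is_involution_cp_def)

lemma mono_carr: "\<sigma> \<in> G \<Longrightarrow> cp_mono \<sigma> d \<in> carr" by (auto simp: cp_mono_def cp_carrier_def)
lemma zero_carr: "cp_zero \<in> carr" by (simp add: cp_zero_def cp_carrier_def)
lemma emb_carr: "cp_emb k \<in> carr" by (simp add: cp_emb_mono mono_carr id_G)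
lemma basis_carr: "\<sigma> \<in> G \<Longrightarrow> cp_basis \<sigma> \<in> carr" by (simp add: cp_basis_mono mono_carr)

lemma star_eq_zero_iff: "a \<in> carr \<Longrightarrow> star a = cp_zero \<longleftrightarrow> a = cp_zero"
proof -
  have "cp_add cp_zero cp_zero = cp_zero" by (simp add: cp_add_def cp_zero_def)
  then have "star cp_zero = cp_add (star cp_zero) (star cp_zero)" using star_add zero_carr by metis
  then have "star cp_zero = cp_zero" by (auto simp: cp_add_def cp_zero_def fun_eq_iff)
  then show "a \<in> carr \<Longrightarrow> star a = cp_zero \<longleftrightarrow> a = cp_zero" using star_star by metis
qed

lemma mult_mono_mono:
  assumes "\<sigma> \<in> G" "\<tau> \<in> G"
  shows "mult (cp_mono \<sigma> a) (cp_mono \<tau> b) = cp_mono (gmul \<sigma> \<tau>) (\<Phi> \<sigma> \<tau> * \<tau> a * b)"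
proof (rule ext)
  fix \<rho>
  have "mult (cp_mono \<sigma> a) (cp_mono \<tau> b) \<rho> = (\<Sum>x\<in>G. \<Sum>y\<in>G.
      if x = \<sigma> \<and> y = \<tau> then (if gmul \<sigma> \<tau> = \<rho> then \<Phi> \<sigma> \<tau> * \<tau> a * b else 0) else 0)"
    unfolding cp_mult_def cp_mono_def by (intro sum.cong refl) (auto simp: zero_G)
  then show "mult (cp_mono \<sigma> a) (cp_mono \<tau> b) \<rho> = cp_mono (gmul \<sigma> \<tau>) (\<Phi> \<sigma> \<tau> * \<tau> a * b) \<rho>"
    using assms finite_G by (simp add: sum_sum_delta cp_mono_def)
qed

lemma mult_emb_right:
  assumes "a \<in> carr"
  shows "mult a (cp_emb k) = (\<lambda>\<rho>. a \<rho> * k)"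
proof (rule ext)
  fix \<rho>
  have "mult a (cp_emb k) \<rho> = (\<Sum>x\<in>G. \<Sum>y\<in>G. if x = \<rho> \<and> y = id then a \<rho> * k else 0)"
    unfolding cp_mult_def cp_emb_def by (intro sum.cong refl) (auto simp: gmul_def Phi_id_right)
  then show "mult a (cp_emb k) \<rho> = a \<rho> * k"
    using assms finite_G id_G by (auto simp: sum_sum_delta cp_carrier_def)
qed

lemma mult_emb_left:
  assumes "a \<in> carr"
  shows "mult (cp_emb k) a = (\<lambda>\<rho>. \<rho> k * a \<rho>)"
proof (rule ext)
  fix \<rho>
  have "mult (cp_emb k) a \<rho> = (\<Sum>x\<in>G. \<Sum>y\<in>G. if x = id \<and> y = \<rho> then \<rho> k * a \<rho> else 0)"
    unfolding cp_mult_def cp_emb_def by (intro sum.cong refl) (auto simp: gmul_def Phi_id_left zero_G)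
  then show "mult (cp_emb k) a \<rho> = \<rho> k * a \<rho>"
    using assms finite_G id_G by (auto simp: sum_sum_delta cp_carrier_def)
qed

lemma star_emb: "star (cp_emb k) = cp_emb (kst k)"
proof -
  obtain j where "star (cp_emb k) = cp_emb j" using K_stable by blast
  then show ?thesis by (simp add: kstar_def cp_f_def cp_emb_def)
qed

lemma emb_inj: "cp_emb a = cp_emb b \<longleftrightarrow> a = b"
  by (metis cp_emb_def)

lemma emb_add: "cp_emb (a + b) = cp_add (cp_emb a) (cp_emb b)"
  by (auto simp: cp_emb_def cp_add_def)

lemma emb_mult: "cp_emb (a * b) = mult (cp_emb a) (cp_emb b)"
  by (simp add: emb_carr mult_emb_right) (simp add: cp_emb_def fun_eq_iff)

lemma kst_add: "kst (a + b) = kst a + kst b"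
  using star_add[OF emb_carr emb_carr, of a b] by (simp add: star_emb emb_add[symmetric] emb_inj)

lemma kst_mult: "kst (a * b) = kst a * kst b"
  using star_mult[OF emb_carr emb_carr, of a b]
  by (simp add: star_emb emb_mult[symmetric] emb_inj mult.commute)

lemma kst_kst: "kst (kst a) = a"
  using star_star[OF emb_carr, of a] by (simp add: star_emb emb_inj)

lemma kst_zero: "kst 0 = 0" using kst_add[of 0 0] by simp

lemma kst_one: "kst 1 = 1" using kst_mult[of 1 "kst 1"] by (simp add: kst_kst)

lemma kst_eq_0_iff: "kst a = 0 \<longleftrightarrow> a = 0" using kst_kst kst_zero by metis

lemma kst_inverse: "kst (inverse a) = inverse (kst a)"
proof (cases "a = 0")
  case False
  then have "kst a * kst (inverse a) = 1" using kst_mult[of a "inverse a"] by (simp add: kst_one)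
  then show ?thesis by (metis inverse_unique)
qed (simp add: kst_zero)

text \<open>Applying the involution to \<open>k e\<^sub>\<sigma> = e\<^sub>\<sigma> k\<^sup>\<sigma>\<close> gives
  \<open>(star e\<^sub>\<sigma>) kst k = kst(k\<^sup>\<sigma>) (star e\<^sub>\<sigma>)\<close>; comparing coefficients, every \<open>\<rho>\<close> in the support of
  \<open>star e\<^sub>\<sigma>\<close> satisfies \<open>kst k = \<rho> (kst (\<sigma> k))\<close> for all k.\<close>

lemma star_basis_support:
  assumes "\<sigma> \<in> G" "star (cp_basis \<sigma>) \<rho> \<noteq> 0"
  shows "kst k = \<rho> (kst (\<sigma> k))"
proof -
  have "mult (cp_emb k) (cp_basis \<sigma>) = mult (cp_basis \<sigma>) (cp_emb (\<sigma> k))"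
    using mult_mono_mono[OF id_G assms(1)] mult_mono_mono[OF assms(1) id_G] assms(1)
    by (simp add: cp_emb_mono cp_basis_mono gmul_def Phi_id_left Phi_id_right one_G)
  then have "mult (star (cp_basis \<sigma>)) (cp_emb (kst k)) = mult (cp_emb (kst (\<sigma> k))) (star (cp_basis \<sigma>))"
    using arg_cong[of _ _ star] star_mult basis_carr[OF assms(1)] emb_carr by (metis star_emb)
  then have "star (cp_basis \<sigma>) \<rho> * kst k = \<rho> (kst (\<sigma> k)) * star (cp_basis \<sigma>) \<rho>"
    using star_carr[OF basis_carr[OF assms(1)]] by (simp add: mult_emb_right mult_emb_left fun_eq_iff)
  then show ?thesis using assms(2) by (simp add: mult.commute)
qed

text \<open>Consequently the support is a single automorphism \<open>rho \<sigma>\<close>, and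
  \<open>star e\<^sub>\<sigma> = e\<^bsub>rho \<sigma>\<^esub> d\<^sub>\<sigma>\<close> with \<open>d\<^sub>\<sigma> \<noteq> 0\<close>.\<close>

definition rho :: "('k \<Rightarrow> 'k) \<Rightarrow> ('k \<Rightarrow> 'k)" where
  "rho \<sigma> = (SOME \<rho>. star (cp_basis \<sigma>) \<rho> \<noteq> 0)"

definition dcoef :: "('k \<Rightarrow> 'k) \<Rightarrow> 'k" where
  "dcoef \<sigma> = star (cp_basis \<sigma>) (rho \<sigma>)"

lemma dcoef_nonzero: "\<sigma> \<in> G \<Longrightarrow> dcoef \<sigma> \<noteq> 0"
proof -
  assume s: "\<sigma> \<in> G"
  have "star (cp_basis \<sigma>) \<noteq> cp_zero"
    using star_eq_zero_iff[OF basis_carr[OF s]] by (auto simp: cp_basis_def cp_zero_def fun_eq_iff)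
  then obtain \<rho> where "star (cp_basis \<sigma>) \<rho> \<noteq> 0" by (auto simp: cp_zero_def)
  then show ?thesis unfolding dcoef_def rho_def by (metis (mono_tags, lifting) someI)
qed

lemma rho_G: "\<sigma> \<in> G \<Longrightarrow> rho \<sigma> \<in> G"
  using dcoef_nonzero star_carr[OF basis_carr] by (auto simp: cp_carrier_def dcoef_def)

lemma rho_rel: "\<sigma> \<in> G \<Longrightarrow> kst k = rho \<sigma> (kst (\<sigma> k))"
  using star_basis_support dcoef_nonzero by (simp add: dcoef_def)

lemma star_basis: "\<sigma> \<in> G \<Longrightarrow> star (cp_basis \<sigma>) = cp_mono (rho \<sigma>) (dcoef \<sigma>)"
proof (rule ext)
  fix \<rho> assume s: "\<sigma> \<in> G"
  show "star (cp_basis \<sigma>) \<rho> = cp_mono (rho \<sigma>) (dcoef \<sigma>) \<rho>"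
  proof (cases "star (cp_basis \<sigma>) \<rho> = 0")
    case False
    have "\<rho> x = rho \<sigma> x" for x
      using star_basis_support[OF s False, of "inv \<sigma> (kst x)"] rho_rel[OF s, of "inv \<sigma> (kst x)"]
      by (simp add: inv_right_G[OF s] kst_kst)
    then show ?thesis by (auto simp: cp_mono_def dcoef_def)
  qed (use dcoef_nonzero[OF s] in \<open>auto simp: cp_mono_def dcoef_def\<close>)
qed

text \<open>Hence the involution maps monomials to monomials:
  \<open>star (e\<^sub>\<sigma> b) = (kst b) e\<^bsub>rho \<sigma>\<^esub> d\<^sub>\<sigma> = e\<^bsub>rho \<sigma>\<^esub> (kst b)\<^bsup>rho \<sigma>\<^esup> d\<^sub>\<sigma>\<close>.\<close>

lemma star_mono:
  assumes "\<sigma> \<in> G"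
  shows "star (cp_mono \<sigma> b) = cp_mono (rho \<sigma>) (rho \<sigma> (kst b) * dcoef \<sigma>)"
proof -
  have "cp_mono \<sigma> b = mult (cp_basis \<sigma>) (cp_emb b)"
    using mult_mono_mono[OF assms id_G] assms by (simp add: cp_emb_mono cp_basis_mono gmul_def Phi_id_right)
  then have "star (cp_mono \<sigma> b) = mult (star (cp_emb b)) (star (cp_basis \<sigma>))"
    using star_mult basis_carr[OF assms] emb_carr by simp
  also have "\<dots> = mult (cp_mono id (kst b)) (cp_mono (rho \<sigma>) (dcoef \<sigma>))"
    by (simp only: star_emb star_basis[OF assms]) (simp only: cp_emb_mono)
  finally show ?thesis
    using mult_mono_mono[OF id_G rho_G[OF assms]] by (simp add: gmul_def Phi_id_left rho_G assms)
qed

text \<open>Condition (2) of the theorem asks that the involution of K commutes with the Galois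
  action.  By \<open>rho_rel\<close> this says precisely that \<open>rho \<sigma>\<close> is the inverse of \<open>\<sigma>\<close>.\<close>

definition compatible :: bool where
  "compatible \<longleftrightarrow> (\<forall>k. \<forall>\<sigma>\<in>G. \<sigma> (kst k) = kst (\<sigma> k))"

lemma compatible_iff: "compatible \<longleftrightarrow> (\<forall>\<sigma>\<in>G. \<sigma> \<circ> rho \<sigma> = id)"
proof
  assume c: compatible
  show "\<forall>\<sigma>\<in>G. \<sigma> \<circ> rho \<sigma> = id"
  proof (intro ballI ext)
    fix \<sigma> x assume s: "\<sigma> \<in> G"
    have "rho \<sigma> (\<sigma> y) = y" for y
      using rho_rel[OF s, of "kst y"] c s by (simp add: compatible_def kst_kst)
    from this[of "inv \<sigma> x"] show "(\<sigma> \<circ> rho \<sigma>) x = id x" by (simp add: inv_right_G[OF s])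
  qed
next
  assume r: "\<forall>\<sigma>\<in>G. \<sigma> \<circ> rho \<sigma> = id"
  show compatible unfolding compatible_def
  proof (intro allI ballI)
    fix k \<sigma> assume s: "\<sigma> \<in> G"
    have "\<sigma> (kst k) = \<sigma> (rho \<sigma> (kst (\<sigma> k)))" using rho_rel[OF s] by metis
    then show "\<sigma> (kst k) = kst (\<sigma> k)" using r s by (metis comp_apply id_apply)
  qed
qed

lemma compatible_rho_inverse:
  assumes "compatible" "\<sigma> \<in> G" "\<tau> \<in> G"
  shows "\<tau> \<circ> rho \<sigma> = id \<longleftrightarrow> \<tau> = \<sigma>"
proof
  assume h: "\<tau> \<circ> rho \<sigma> = id"
  show "\<tau> = \<sigma>"
  proof (rule ext)
    fix x
    have "\<tau> x = (\<tau> \<circ> rho \<sigma>) (\<sigma> x)"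
      using rho_rel[OF assms(2), of "kst x"] assms by (simp add: compatible_def kst_kst)
    then show "\<tau> x = \<sigma> x" using h by simp
  qed
qed (use assms compatible_iff in auto)

lemma compatible_rho_cancel: "compatible \<Longrightarrow> \<sigma> \<in> G \<Longrightarrow> \<sigma> (rho \<sigma> x) = x"
  using compatible_iff by (metis comp_apply id_apply)

definition bnorm :: "('k \<Rightarrow> 'k) \<Rightarrow> 'k" where
  "bnorm \<sigma> = \<Phi> (rho \<sigma>) \<sigma> * \<sigma> (dcoef \<sigma>)"

lemma bnorm_nonzero: "\<sigma> \<in> G \<Longrightarrow> bnorm \<sigma> \<noteq> 0"
  by (simp add: bnorm_def Phi_nonzero rho_G eq_0_G dcoef_nonzero)

lemma norm_basis: "\<sigma> \<in> G \<Longrightarrow> mult (star (cp_basis \<sigma>)) (cp_basis \<sigma>) = cp_mono (\<sigma> \<circ> rho \<sigma>) (bnorm \<sigma>)"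
  using mult_mono_mono[OF rho_G] by (simp only: star_basis) (simp add: cp_basis_mono gmul_def bnorm_def)

lemma norm_basis_in_K_iff:
  "(\<forall>\<sigma>\<in>G. mult (star (cp_basis \<sigma>)) (cp_basis \<sigma>) \<in> range cp_emb) \<longleftrightarrow> compatible"
  unfolding compatible_iff
proof (intro ball_cong refl iffI)
  fix \<sigma> assume s: "\<sigma> \<in> G"
  assume "mult (star (cp_basis \<sigma>)) (cp_basis \<sigma>) \<in> range cp_emb"
  then obtain j where "cp_mono (\<sigma> \<circ> rho \<sigma>) (bnorm \<sigma>) = cp_emb j" using norm_basis[OF s] by auto
  then have "cp_mono (\<sigma> \<circ> rho \<sigma>) (bnorm \<sigma>) (\<sigma> \<circ> rho \<sigma>) = cp_emb j (\<sigma> \<circ> rho \<sigma>)" by simp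
  then show "\<sigma> \<circ> rho \<sigma> = id"
    using bnorm_nonzero[OF s] by (auto simp: cp_mono_def cp_emb_def split: if_splits)
next
  fix \<sigma> assume s: "\<sigma> \<in> G"
  show "\<sigma> \<circ> rho \<sigma> = id \<Longrightarrow> mult (star (cp_basis \<sigma>)) (cp_basis \<sigma>) \<in> range cp_emb"
    using norm_basis[OF s] by (simp add: cp_emb_mono[symmetric])
qed

lemma norm_basis_compatible:
  "compatible \<Longrightarrow> \<sigma> \<in> G \<Longrightarrow> mult (star (cp_basis \<sigma>)) (cp_basis \<sigma>) = cp_emb (bnorm \<sigma>)"
  using norm_basis compatible_iff by (simp add: cp_emb_mono)

lemma bnorm_hermitian:
  assumes "compatible" "\<sigma> \<in> G"
  shows "kst (bnorm \<sigma>) = bnorm \<sigma>"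
proof -
  have "star (mult (star (cp_basis \<sigma>)) (cp_basis \<sigma>)) = mult (star (cp_basis \<sigma>)) (cp_basis \<sigma>)"
    using star_mult star_star basis_carr[OF assms(2)] star_carr by simp
  then show ?thesis using norm_basis_compatible[OF assms] by (simp add: star_emb emb_inj)
qed

lemma bnorm_id: "compatible \<Longrightarrow> bnorm id = 1"
proof -
  assume "compatible"
  then have r: "rho id = id" using compatible_iff id_G by fastforce
  have "cp_mono id (dcoef id) = cp_mono id 1"
    using star_basis[OF id_G] star_emb[of 1] by (simp add: r kst_one cp_emb_mono cp_basis_mono)
  then have "dcoef id = 1" by (metis cp_mono_def)
  then show ?thesis by (simp add: bnorm_def r Phi_id_left id_G)
qed

text \<open>The diagonal hermitian form \<open>x \<mapsto> \<Sum>\<^sub>\<sigma> kst(x\<^sub>\<sigma>) c\<^sub>\<sigma> x\<^sub>\<sigma>\<close> on \<open>K\<^sup>G\<close>.  It is the hub of the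
  proof: it computes \<open>f((star x) x)\<close> and the diagonal of \<open>X X\<^sup>#\<close>, and each condition of the
  theorem amounts to its strong anisotropy (a vanishing sum of its values forces all
  arguments to vanish).\<close>

definition herm_form :: "(('k \<Rightarrow> 'k) \<Rightarrow> 'k) \<Rightarrow> 'k" where
  "herm_form x = (\<Sum>\<sigma>\<in>G. kst (x \<sigma>) * bnorm \<sigma> * x \<sigma>)"

definition anisotropic :: bool where
  "anisotropic \<longleftrightarrow>
     (\<forall>(m::nat) x. (\<Sum>i<m. herm_form (x i)) = 0 \<longrightarrow> (\<forall>i<m. \<forall>\<sigma>\<in>G. x i \<sigma> = 0))"

text \<open>The trace formula \<open>f((star x) x) = \<Sum>\<^sub>\<sigma> kst(x\<^sub>\<sigma>) c\<^sub>\<sigma> x\<^sub>\<sigma>\<close> under compatibility, obtained by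
  expanding x into monomials; first the additivity facts it needs.\<close>

lemma mono_decomposition: "s \<in> carr \<Longrightarrow> s = (\<lambda>\<rho>. \<Sum>\<sigma>\<in>G. cp_mono \<sigma> (s \<sigma>) \<rho>)"
  by (rule ext) (auto simp: cp_mono_def sum.delta' finite_G cp_carrier_def)

lemma star_sum:
  assumes "finite S" "\<forall>i\<in>S. t i \<in> carr"
  shows "star (\<lambda>\<rho>. \<Sum>i\<in>S. t i \<rho>) = (\<lambda>\<rho>. \<Sum>i\<in>S. star (t i) \<rho>)"
  using assms
proof (induct S rule: finite_induct)
  case empty
  then show ?case using star_eq_zero_iff[OF zero_carr] by (simp add: cp_zero_def)
next
  case (insert x F)
  have "(\<lambda>\<rho>. \<Sum>i\<in>insert x F. t i \<rho>) = cp_add (t x) (\<lambda>\<rho>. \<Sum>i\<in>F. t i \<rho>)"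
    using insert by (simp add: cp_add_def)
  moreover have "(\<lambda>\<rho>. \<Sum>i\<in>F. t i \<rho>) \<in> carr" using insert by (auto simp: cp_carrier_def)
  ultimately show ?case using insert star_add by (simp add: cp_add_def)
qed

lemma mult_sum_left:
  assumes "finite S"
  shows "mult (\<lambda>\<rho>. \<Sum>i\<in>S. t i \<rho>) d = (\<lambda>\<rho>. \<Sum>i\<in>S. mult (t i) d \<rho>)"
proof (rule ext)
  fix \<rho>
  have "mult (\<lambda>\<rho>. \<Sum>i\<in>S. t i \<rho>) d \<rho> = (\<Sum>x\<in>G. \<Sum>y\<in>G. \<Sum>i\<in>S.
        if gmul x y = \<rho> then \<Phi> x y * y (t i x) * d y else 0)"
    unfolding cp_mult_def
    by (intro sum.cong refl) (simp add: sum_G sum_distrib_left sum_distrib_right)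
  also have "\<dots> = (\<Sum>i\<in>S. mult (t i) d \<rho>)"
    unfolding cp_mult_def by (simp add: sum.swap[of _ S])
  finally show "mult (\<lambda>\<rho>. \<Sum>i\<in>S. t i \<rho>) d \<rho> = (\<Sum>i\<in>S. mult (t i) d \<rho>)" .
qed

lemma cp_f_mult_mono_left:
  assumes "\<rho> \<in> G"
  shows "cp_f (mult (cp_mono \<rho> v) s) = (\<Sum>\<tau>\<in>G. if \<tau> \<circ> \<rho> = id then \<Phi> \<rho> \<tau> * \<tau> v * s \<tau> else 0)"
proof -
  have "cp_f (mult (cp_mono \<rho> v) s) = (\<Sum>\<sigma>\<in>G. if \<sigma> = \<rho> then
      (\<Sum>\<tau>\<in>G. if \<tau> \<circ> \<rho> = id then \<Phi> \<rho> \<tau> * \<tau> v * s \<tau> else 0) else 0)"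
    unfolding cp_f_def cp_mult_def cp_mono_def gmul_def by (intro sum.cong refl) (auto simp: zero_G intro!: sum.neutral)
  then show ?thesis using assms finite_G by (simp add: sum.delta)
qed

lemma trace_norm:
  assumes "compatible" "s \<in> carr"
  shows "cp_f (mult (star s) s) = herm_form s"
proof -
  let ?v = "\<lambda>\<sigma>. rho \<sigma> (kst (s \<sigma>)) * dcoef \<sigma>"
  have "star s = (\<lambda>\<rho>. \<Sum>\<sigma>\<in>G. cp_mono (rho \<sigma>) (?v \<sigma>) \<rho>)"
    using star_sum[OF finite_G, of "\<lambda>\<sigma>. cp_mono \<sigma> (s \<sigma>)"] mono_decomposition[OF assms(2)] mono_carr
    by (simp add: star_mono)
  then have "cp_f (mult (star s) s) = (\<Sum>\<sigma>\<in>G. cp_f (mult (cp_mono (rho \<sigma>) (?v \<sigma>)) s))"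
    by (simp add: mult_sum_left[OF finite_G] cp_f_def)
  also have "\<dots> = (\<Sum>\<sigma>\<in>G. \<Phi> (rho \<sigma>) \<sigma> * \<sigma> (?v \<sigma>) * s \<sigma>)"
  proof (rule sum.cong[OF refl])
    fix \<sigma> assume \<sigma>: "\<sigma> \<in> G"
    have "(\<Sum>\<tau>\<in>G. if \<tau> \<circ> rho \<sigma> = id then \<Phi> (rho \<sigma>) \<tau> * \<tau> (?v \<sigma>) * s \<tau> else 0)
        = (\<Sum>\<tau>\<in>G. if \<tau> = \<sigma> then \<Phi> (rho \<sigma>) \<tau> * \<tau> (?v \<sigma>) * s \<tau> else 0)"
      using compatible_rho_inverse[OF assms(1) \<sigma>] by (intro sum.cong) auto
    then show "cp_f (mult (cp_mono (rho \<sigma>) (?v \<sigma>)) s) = \<Phi> (rho \<sigma>) \<sigma> * \<sigma> (?v \<sigma>) * s \<sigma>"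
      using \<sigma> finite_G by (simp add: cp_f_mult_mono_left rho_G)
  qed
  also have "\<dots> = herm_form s"
    unfolding herm_form_def using compatible_rho_cancel[OF assms(1)]
    by (intro sum.cong refl) (simp add: bnorm_def mult_G rho_G mult_ac)
  finally show ?thesis .
qed

text \<open>The Gram matrix \<open>A = [f((star e\<^sub>\<sigma>) e\<^sub>\<tau>)]\<close> is a monomial matrix: row \<open>\<sigma>\<close> has its
  only entry in the column \<open>inv (rho \<sigma>)\<close>, and \<open>\<sigma> \<mapsto> inv (rho \<sigma>)\<close> permutes G.\<close>

definition gram_perm :: "('k \<Rightarrow> 'k) \<Rightarrow> ('k \<Rightarrow> 'k)" where
  "gram_perm \<sigma> = inv (rho \<sigma>)"

definition gram_weight :: "('k \<Rightarrow> 'k) \<Rightarrow> 'k" where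
  "gram_weight \<sigma> = \<Phi> (rho \<sigma>) (gram_perm \<sigma>) * gram_perm \<sigma> (dcoef \<sigma>)"

lemma comp_rho_eq_id_iff: "\<sigma> \<in> G \<Longrightarrow> \<tau> \<circ> rho \<sigma> = id \<longleftrightarrow> \<tau> = gram_perm \<sigma>"
  using bij_G[OF rho_G] unfolding gram_perm_def
  by (metis bij_is_inj bij_is_surj comp_id inv_o_cancel o_assoc surj_iff)

lemma gram_perm_G: "\<sigma> \<in> G \<Longrightarrow> gram_perm \<sigma> \<in> G"
  by (simp add: gram_perm_def inv_G rho_G)

lemma gram_perm_bij: "bij_betw gram_perm G G"
proof -
  have "inj_on rho G"
  proof (rule inj_onI, rule ext)
    fix \<sigma> \<sigma>' x assume a: "\<sigma> \<in> G" "\<sigma>' \<in> G" "rho \<sigma> = rho \<sigma>'"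
    have "rho \<sigma> (kst (\<sigma> x)) = rho \<sigma> (kst (\<sigma>' x))" using rho_rel[OF a(1)] rho_rel[OF a(2)] a(3) by metis
    then show "\<sigma> x = \<sigma>' x" using inj_G[OF rho_G[OF a(1)]] kst_kst by metis
  qed
  then have "inj_on gram_perm G"
    unfolding gram_perm_def inj_on_def using bij_G rho_G by (metis inv_inv_eq)
  then show ?thesis
    using endo_inj_surj[OF finite_G _ \<open>inj_on gram_perm G\<close>] gram_perm_G by (auto simp: bij_betw_def)
qed

lemma gram_weight_nonzero: "\<sigma> \<in> G \<Longrightarrow> gram_weight \<sigma> \<noteq> 0"
  by (simp add: gram_weight_def Phi_nonzero rho_G gram_perm_G eq_0_G dcoef_nonzero)

lemma gram_monomial: "gram G \<Phi> star = monomial_mat G gram_perm gram_weight"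
proof (intro ext)
  fix \<sigma> \<tau>
  show "gram G \<Phi> star \<sigma> \<tau> = monomial_mat G gram_perm gram_weight \<sigma> \<tau>"
  proof (cases "\<sigma> \<in> G \<and> \<tau> \<in> G")
    case True
    then have "gram G \<Phi> star \<sigma> \<tau> = cp_f (mult (cp_mono (rho \<sigma>) (dcoef \<sigma>)) (cp_basis \<tau>))"
      by (simp add: gram_def star_basis)
    then show ?thesis using True mult_mono_mono[OF rho_G]
      by (simp add: cp_basis_mono cp_f_mono gmul_def comp_rho_eq_id_iff monomial_mat_def gram_weight_def)
  qed (auto simp: gram_def monomial_mat_def gram_perm_G)
qed

lemma gram_inverse:
  defines "B \<equiv> (\<lambda>\<tau> \<sigma>. monomial_mat G gram_perm (\<lambda>\<sigma>. inverse (gram_weight \<sigma>)) \<sigma> \<tau>)"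
  shows "mat_mult G (gram G \<Phi> star) B = mat_one G" and "mat_inv G (gram G \<Phi> star) = B"
  unfolding gram_monomial B_def
  using monomial_mat_inverse[OF finite_G gram_perm_bij] gram_weight_nonzero by auto

lemma gram_compatible: "compatible \<Longrightarrow> gram G \<Phi> star = monomial_mat G id bnorm"
  unfolding gram_monomial monomial_mat_def
  using comp_rho_eq_id_iff compatible_iff
  by (intro ext) (auto simp: gram_weight_def bnorm_def)

lemma mat_sharp_compatible:
  assumes "compatible"
  shows "mat_sharp G \<Phi> star X =
    (\<lambda>\<alpha> \<beta>. if \<alpha> \<in> G \<and> \<beta> \<in> G then inverse (bnorm \<alpha>) * kst (X \<beta> \<alpha>) * bnorm \<beta> else 0)"
proof -
  have transpose: "(\<lambda>\<tau> \<sigma>. monomial_mat G id w \<sigma> \<tau>) = monomial_mat G id w" for w :: "_ \<Rightarrow> 'k"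
    by (intro ext) (auto simp: monomial_mat_def)
  have inv: "mat_inv G (monomial_mat G id bnorm) = monomial_mat G id (\<lambda>\<sigma>. inverse (bnorm \<sigma>))"
    using monomial_mat_inverse(2)[OF finite_G bij_betw_id, of bnorm] bnorm_nonzero
    unfolding transpose by simp
  show ?thesis
    unfolding mat_sharp_def gram_compatible[OF assms] inv diag_mat_mult[OF finite_G] mat_mult_diag[OF finite_G]
    by (intro ext) (auto simp: mat_conj_def)
qed

lemma mat_mult_sharp_compatible:
  assumes "compatible"
  shows "mat_mult G X (mat_sharp G \<Phi> star X) \<alpha> \<beta> =
     (if \<beta> \<in> G then bnorm \<beta> * (\<Sum>\<rho>\<in>G. X \<alpha> \<rho> * inverse (bnorm \<rho>) * kst (X \<beta> \<rho>)) else 0)"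
  unfolding mat_sharp_compatible[OF assms] mat_mult_def
  by (auto simp: sum_distrib_left mult_ac intro: sum.cong)

text \<open>Anisotropy turns the vanishing of \<open>\<Sum> r\<^sub>i (star r\<^sub>i)\<close> into the vanishing of all \<open>r\<^sub>i\<close>:
  its identity coefficient is a sum of values of the hermitian form, by the trace formula.\<close>

lemma anisotropic_formally_real_cp:
  assumes compat: "compatible" and aniso: "anisotropic"
  shows "formally_real_cp G \<Phi> star"
  unfolding formally_real_cp_def
proof (intro allI impI)
  fix m :: nat and r j
  assume rc: "\<forall>i<m. r i \<in> carr" and z: "\<forall>\<rho>. (\<Sum>i<m. mult (r i) (star (r i)) \<rho>) = 0"
    and j: "j < m"
  define s where "s i = star (r i)" for i
  have sc: "\<forall>i<m. s i \<in> carr" using rc star_carr s_def by simp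
  have "(\<Sum>i<m. herm_form (s i)) = (\<Sum>i<m. mult (r i) (star (r i)) id)"
    using rc sc by (intro sum.cong refl) (simp add: trace_norm[OF compat, symmetric] s_def star_star cp_f_def)
  then have "\<forall>\<sigma>\<in>G. s j \<sigma> = 0" using z aniso j by (simp add: anisotropic_def)
  then have "s j = cp_zero" using sc j by (auto simp: cp_carrier_def cp_zero_def fun_eq_iff)
  then show "r j = cp_zero" using s_def star_eq_zero_iff rc j by auto
qed

text \<open>A hermitian cone containing all \<open>c\<^sub>\<sigma>\<close> contains every value of the form, so pointedness of
  the cone gives anisotropy.\<close>

lemma cone_anisotropic:
  assumes cone: "herm_cone kst M" and norms: "\<forall>\<sigma>\<in>G. bnorm \<sigma> \<in> M"
  shows "anisotropic"
  unfolding anisotropic_def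
proof (intro allI impI ballI)
  fix m :: nat and x j \<sigma>
  assume z: "(\<Sum>i<m. herm_form (x i)) = 0" and j: "j < m" and \<sigma>: "\<sigma> \<in> G"
  define t where "t p = kst (x (fst p) (snd p)) * bnorm (snd p) * x (fst p) (snd p)" for p
  have "(\<Sum>p\<in>{..<m} \<times> G. t p) = (\<Sum>i<m. herm_form (x i))"
    unfolding herm_form_def t_def sum.cartesian_product by (simp add: case_prod_beta)
  then have sum_zero: "(\<Sum>p\<in>{..<m} \<times> G. t p) = 0" using z by simp
  have "t p \<in> M" if "p \<in> {..<m} \<times> G" for p
  proof -
    have "bnorm (snd p) \<in> M" using norms that by auto
    then have "kst (x (fst p) (snd p)) * bnorm (snd p) * kst (kst (x (fst p) (snd p))) \<in> M"
      using cone unfolding herm_cone_def by blast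
    then show ?thesis by (simp add: t_def kst_kst)
  qed
  then have "\<forall>p\<in>{..<m} \<times> G. t p = 0"
    using herm_cone_sum_eq_zero[OF cone _ _ sum_zero] finite_G by blast
  then have "kst (x j \<sigma>) * bnorm \<sigma> * x j \<sigma> = 0" using j \<sigma> by (auto simp: t_def)
  then show "x j \<sigma> = 0" using bnorm_nonzero[OF \<sigma>] by (simp add: kst_eq_0_iff)
qed

text \<open>Under compatibility, the diagonal entry \<open>(\<alpha>,\<alpha>)\<close> of \<open>X X\<^sup>#\<close> is \<open>c\<^sub>\<alpha>\<close> times the value of
  the form at the row \<open>\<alpha>\<close> of X divided entrywise by \<open>c\<close>; hence anisotropy gives (1).\<close>

lemma anisotropic_formally_real_mat:
  assumes compat: "compatible" and aniso: "anisotropic"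
  shows "formally_real_mat G \<Phi> star"
  unfolding formally_real_mat_def
proof (intro allI impI)
  fix m :: nat and r j
  assume rc: "\<forall>i<m. r i \<in> mat_carrier G"
    and z: "\<forall>\<sigma> \<tau>. (\<Sum>i<m. mat_mult G (r i) (mat_sharp G \<Phi> star (r i)) \<sigma> \<tau>) = 0"
    and j: "j < m"
  have row_zero: "\<forall>i<m. \<forall>\<rho>\<in>G. r i \<alpha> \<rho> = 0" if \<alpha>: "\<alpha> \<in> G" for \<alpha>
  proof -
    define x where "x i \<rho> = r i \<alpha> \<rho> * inverse (bnorm \<rho>)" for i \<rho>
    have entry: "r i \<alpha> \<rho> * inverse (bnorm \<rho>) * kst (r i \<alpha> \<rho>) = kst (x i \<rho>) * bnorm \<rho> * x i \<rho>"
      if "\<rho> \<in> G" for i \<rho>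
      using that bnorm_nonzero[OF that] bnorm_hermitian[OF compat that]
      by (simp add: x_def kst_mult kst_inverse)
    have "bnorm \<alpha> * (\<Sum>i<m. herm_form (x i)) = 0"
      using z[rule_format, of \<alpha> \<alpha>] \<alpha>
      by (simp add: mat_mult_sharp_compatible[OF compat] herm_form_def entry sum_distrib_left)
    then have "\<forall>i<m. \<forall>\<rho>\<in>G. x i \<rho> = 0" using aniso bnorm_nonzero[OF \<alpha>] by (simp add: anisotropic_def)
    then show ?thesis using bnorm_nonzero by (simp add: x_def)
  qed
  show "r j = (\<lambda>_ _. 0)"
  proof (intro ext)
    fix \<alpha> \<rho>
    show "r j \<alpha> \<rho> = 0" using row_zero rc j unfolding mat_carrier_def by blast
  qed
qed

text \<open>Conversely, placing \<open>kst(x\<^sub>\<rho>) c\<^sub>\<rho>\<close> in the row \<open>id\<close> of a matrix X gives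
  \<open>X X\<^sup># = herm_form x\<close> at \<open>(id,id)\<close> and 0 elsewhere, so (1) gives anisotropy.\<close>

lemma formally_real_mat_anisotropic:
  assumes compat: "compatible" and fm: "formally_real_mat G \<Phi> star"
  shows "anisotropic"
  unfolding anisotropic_def
proof (intro allI impI ballI)
  fix m :: nat and x j \<sigma>
  assume z: "(\<Sum>i<m. herm_form (x i)) = 0" and j: "j < m" and \<sigma>: "\<sigma> \<in> G"
  define X where "X i = (\<lambda>\<alpha> \<beta>. if \<alpha> = (id :: 'k \<Rightarrow> 'k) \<and> \<beta> \<in> G then kst (x i \<beta>) * bnorm \<beta> else 0)" for i
  have XX: "mat_mult G (X i) (mat_sharp G \<Phi> star (X i)) \<alpha> \<beta> =
      (if \<alpha> = id \<and> \<beta> = id then 1 else 0) * herm_form (x i)" for i \<alpha> \<beta>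
  proof -
    have "kst (x i \<rho>) * bnorm \<rho> * inverse (bnorm \<rho>) * kst (kst (x i \<rho>) * bnorm \<rho>)
        = kst (x i \<rho>) * bnorm \<rho> * x i \<rho>" if "\<rho> \<in> G" for \<rho>
      using bnorm_nonzero[OF that] bnorm_hermitian[OF compat that] by (simp add: kst_mult kst_kst)
    then show ?thesis using id_G
      by (auto simp: mat_mult_sharp_compatible[OF compat] X_def bnorm_id[OF compat] herm_form_def kst_zero
          intro!: sum.cong)
  qed
  have "\<forall>\<alpha> \<beta>. (\<Sum>i<m. mat_mult G (X i) (mat_sharp G \<Phi> star (X i)) \<alpha> \<beta>) = 0"
    using z by (simp add: XX sum_distrib_left[symmetric])
  moreover have "\<forall>i<m. X i \<in> mat_carrier G" using id_G by (auto simp: X_def mat_carrier_def)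
  ultimately have "X j = (\<lambda>_ _. 0)" using fm j unfolding formally_real_mat_def by blast
  then have "kst (x j \<sigma>) * bnorm \<sigma> = 0" using \<sigma> unfolding X_def by (metis (full_types))
  then show "x j \<sigma> = 0" using bnorm_nonzero[OF \<sigma>] by (simp add: kst_eq_0_iff)
qed

text \<open>Condition (1) forces compatibility: otherwise \<open>A\<^sub>\<sigma>\<^sub>\<sigma> = 0\<close> for some \<open>\<sigma>\<close>, and the nonzero
  matrix \<open>X = E\<^sub>\<sigma>\<^sub>\<sigma> A\<close> satisfies \<open>X X\<^sup># = E\<^sub>\<sigma>\<^sub>\<sigma> X\<^sup>* A = 0\<close>.\<close>

lemma formally_real_mat_compatible:
  assumes fm: "formally_real_mat G \<Phi> star"
  shows "compatible"
  unfolding compatible_iff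
proof (rule ballI, rule ccontr)
  fix \<sigma> assume \<sigma>: "\<sigma> \<in> G" and ne: "\<sigma> \<circ> rho \<sigma> \<noteq> id"
  let ?A = "gram G \<Phi> star"
  have A0: "?A \<sigma> \<sigma> = 0"
    using ne comp_rho_eq_id_iff[OF \<sigma>] by (simp add: gram_monomial monomial_mat_def)
  define E where "E = monomial_mat G id (\<lambda>\<tau>. if \<tau> = \<sigma> then 1 else 0)"
  define X where "X = mat_mult G E ?A"
  have X_row: "X = (\<lambda>\<alpha> \<beta>. if \<alpha> = \<sigma> then ?A \<sigma> \<beta> else 0)"
    using \<sigma> by (intro ext) (auto simp: X_def E_def diag_mat_mult[OF finite_G])
  have E_carrier: "E \<in> mat_carrier G" by (auto simp: E_def monomial_mat_def mat_carrier_def)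
  have X_carrier: "X \<in> mat_carrier G" using \<sigma> by (auto simp: X_row mat_carrier_def gram_def)
  have "mat_mult G X (mat_inv G ?A) = E"
    unfolding X_def mat_mult_assoc[OF finite_G] gram_inverse(2) gram_inverse(1)
    by (rule mat_mult_one[OF E_carrier finite_G])
  moreover have "mat_mult G E (mat_conj G star X) = (\<lambda>_ _. 0)"
    unfolding E_def diag_mat_mult[OF finite_G] by (intro ext) (auto simp: mat_conj_def X_row A0 kst_zero)
  ultimately have "mat_mult G X (mat_sharp G \<Phi> star X) = (\<lambda>_ _. 0)"
    by (simp add: mat_sharp_def mat_mult_assoc[OF finite_G, symmetric]) (simp add: mat_mult_def)
  then have "\<forall>\<alpha> \<beta>. (\<Sum>i<Suc 0. mat_mult G X (mat_sharp G \<Phi> star X) \<alpha> \<beta>) = 0" by simp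
  then have "X = (\<lambda>_ _. 0)"
    using fm[unfolded formally_real_mat_def, rule_format, of "Suc 0" "\<lambda>_. X"] X_carrier by simp
  then have "?A \<sigma> (gram_perm \<sigma>) = 0" using X_row by metis
  then show False using \<sigma> gram_weight_nonzero gram_perm_G by (simp add: gram_monomial monomial_mat_def)
qed

text \<open>From condition (2) we build the hermitian cone demanded by (3): the finite sums of norms
  \<open>(star x) x = kst(b) c\<^sub>\<sigma> b\<close> of monomials \<open>x = e\<^sub>\<sigma> b\<close>, encoded as lists of pairs \<open>(b,\<sigma>)\<close>.\<close>

lemma norm_mono:
  assumes "compatible" "\<sigma> \<in> G"
  shows "mult (star (cp_mono \<sigma> b)) (cp_mono \<sigma> b) = cp_emb (kst b * bnorm \<sigma> * b)"
  using mult_mono_mono[OF rho_G[OF assms(2)] assms(2)] compatible_iff assms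
  by (simp add: star_mono cp_emb_mono gmul_def bnorm_def mult_G rho_G compatible_rho_cancel[OF assms] mult_ac)

definition mono_norms :: "('k \<times> ('k \<Rightarrow> 'k)) list \<Rightarrow> 'k" where
  "mono_norms ps = (\<Sum>(b, \<sigma>)\<leftarrow>ps. kst b * bnorm \<sigma> * b)"

definition norm_cone :: "'k set" where
  "norm_cone = {mono_norms ps | ps. snd ` set ps \<subseteq> G}"

lemma mono_norms_append: "mono_norms (ps @ qs) = mono_norms ps + mono_norms qs"
  by (simp add: mono_norms_def)

lemma mono_norms_hermitian: "compatible \<Longrightarrow> snd ` set ps \<subseteq> G \<Longrightarrow> kst (mono_norms ps) = mono_norms ps"
  by (induct ps) (auto simp: mono_norms_def kst_zero kst_add kst_mult kst_kst bnorm_hermitian mult_ac)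

lemma mono_norms_scale: "a * mono_norms ps * kst a = mono_norms (map (\<lambda>(b, \<sigma>). (b * kst a, \<sigma>)) ps)"
  by (induct ps) (auto simp: mono_norms_def kst_mult kst_kst algebra_simps)

text \<open>A vanishing sum of such norms is a vanishing sum \<open>\<Sum> r\<^sub>j (star r\<^sub>j)\<close> with
  \<open>r\<^sub>j = star(e\<^sub>\<sigma>\<^sub>j b\<^sub>j)\<close>, so formal reality of D kills every \<open>b\<^sub>j\<close>.\<close>

lemma mono_norms_eq_zero:
  assumes compat: "compatible" and fr: "formally_real_cp G \<Phi> star"
    and ps: "snd ` set ps \<subseteq> G" and z: "mono_norms ps = 0"
  shows "\<forall>p\<in>set ps. fst p = 0"
proof -
  define r where "r j = star (cp_mono (snd (ps ! j)) (fst (ps ! j)))" for j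
  define t where "t j = kst (fst (ps ! j)) * bnorm (snd (ps ! j)) * fst (ps ! j)" for j
  have G: "snd (ps ! j) \<in> G" if "j < length ps" for j using ps that by auto
  have rc: "\<forall>j<length ps. r j \<in> carr" using G mono_carr star_carr by (simp add: r_def)
  have rr: "mult (r j) (star (r j)) = cp_emb (t j)" if "j < length ps" for j
    using G[OF that] norm_mono[OF compat] star_star mono_carr by (simp add: r_def t_def)
  have "(\<Sum>j<length ps. t j) = 0"
    using z by (simp add: mono_norms_def sum_list_sum_nth atLeast0LessThan t_def case_prod_beta)
  then have "(\<Sum>j<length ps. mult (r j) (star (r j)) \<rho>) = 0" for \<rho>
    by (cases "\<rho> = id") (simp_all add: rr cp_emb_def)
  then have "\<forall>j<length ps. r j = cp_zero" using fr rc unfolding formally_real_cp_def by blast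
  then have "\<forall>j<length ps. cp_mono (snd (ps ! j)) (fst (ps ! j)) = cp_zero"
    using star_eq_zero_iff mono_carr G by (auto simp: r_def)
  then have "\<forall>j<length ps. fst (ps ! j) = 0" by (metis cp_zero_def cp_mono_def)
  then show ?thesis by (metis in_set_conv_nth)
qed

lemma bnorm_norm_cone: "\<sigma> \<in> G \<Longrightarrow> bnorm \<sigma> \<in> norm_cone"
  unfolding norm_cone_def by (rule CollectI, rule exI[of _ "[(1, \<sigma>)]"]) (simp add: mono_norms_def kst_one)

lemma norm_cone_herm_cone:
  assumes compat: "compatible" and fr: "formally_real_cp G \<Phi> star"
  shows "herm_cone kst norm_cone"
  unfolding herm_cone_def
proof (intro conjI allI ballI impI)
  show "norm_cone \<subseteq> {r. kst r = r}"
    using mono_norms_hermitian[OF compat] by (auto simp: norm_cone_def)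
  show "1 \<in> norm_cone" using bnorm_norm_cone[OF id_G] bnorm_id[OF compat] by simp
next
  fix x y assume "x \<in> norm_cone" "y \<in> norm_cone"
  then obtain ps qs where "snd ` set ps \<subseteq> G" "snd ` set qs \<subseteq> G" "x = mono_norms ps" "y = mono_norms qs"
    by (auto simp: norm_cone_def)
  then show "x + y \<in> norm_cone"
    unfolding norm_cone_def by (intro CollectI exI[of _ "ps @ qs"]) (auto simp: mono_norms_append)
next
  fix a x assume "x \<in> norm_cone"
  then obtain ps where "snd ` set ps \<subseteq> G" "x = mono_norms ps" by (auto simp: norm_cone_def)
  then show "a * x * kst a \<in> norm_cone"
    unfolding norm_cone_def
    by (intro CollectI exI[of _ "map (\<lambda>(b, \<sigma>). (b * kst a, \<sigma>)) ps"]) (fastforce simp: mono_norms_scale)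
next
  fix x assume "x \<in> norm_cone \<and> - x \<in> norm_cone"
  then obtain ps qs where ps: "snd ` set ps \<subseteq> G" "x = mono_norms ps"
    and qs: "snd ` set qs \<subseteq> G" "- x = mono_norms qs"
    by (auto simp: norm_cone_def)
  have sum_zero: "mono_norms (ps @ qs) = 0" by (simp add: mono_norms_append ps(2) qs(2)[symmetric])
  have "snd ` set (ps @ qs) \<subseteq> G" using ps qs by auto
  then have "\<forall>p\<in>set (ps @ qs). fst p = 0" by (rule mono_norms_eq_zero[OF compat fr _ sum_zero])
  then have "\<forall>p\<in>set ps. fst p = 0" by simp
  then show "x = 0" unfolding ps(2) mono_norms_def
    by (induct ps) (auto simp: kst_zero)
qed

lemma formally_real_mat_iff: "formally_real_mat G \<Phi> star \<longleftrightarrow> compatible \<and> anisotropic"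
  using formally_real_mat_compatible formally_real_mat_anisotropic anisotropic_formally_real_mat
  by blast

lemma formally_real_cp_iff: "formally_real_cp G \<Phi> star \<and> compatible \<longleftrightarrow> compatible \<and> anisotropic"
  using anisotropic_formally_real_cp norm_cone_herm_cone bnorm_norm_cone cone_anisotropic
  by blast

lemma norm_cone_condition_iff:
  "((\<forall>\<sigma>\<in>G. mult (star (cp_basis \<sigma>)) (cp_basis \<sigma>) \<in> range cp_emb)
     \<and> (\<exists>M. herm_cone kst M \<and> (\<forall>\<sigma>\<in>G. cp_f (mult (star (cp_basis \<sigma>)) (cp_basis \<sigma>)) \<in> M)))
   \<longleftrightarrow> compatible \<and> anisotropic"
  (is "?in_K \<and> ?cone \<longleftrightarrow> _")
proof -
  have norm: "cp_f (mult (star (cp_basis \<sigma>)) (cp_basis \<sigma>)) = bnorm \<sigma>"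
    if "compatible" "\<sigma> \<in> G" for \<sigma>
    using that by (simp add: norm_basis_compatible cp_f_def cp_emb_def)
  show ?thesis
  proof
    assume "?in_K \<and> ?cone"
    then have compat: "compatible" and "?cone" using norm_basis_in_K_iff by auto
    then obtain M where "herm_cone kst M" "\<forall>\<sigma>\<in>G. bnorm \<sigma> \<in> M" using norm by auto
    then show "compatible \<and> anisotropic" using compat cone_anisotropic by blast
  next
    assume h: "compatible \<and> anisotropic"
    then have "herm_cone kst norm_cone" using norm_cone_herm_cone anisotropic_formally_real_cp by blast
    then have "?cone" using h norm bnorm_norm_cone by auto
    then show "?in_K \<and> ?cone" using h norm_basis_in_K_iff by blast
  qed
qed

end

theorem theorem3p3:
  fixes G :: "('k::field_char_0 \<Rightarrow> 'k) set"
    and \<Phi> :: "('k \<Rightarrow> 'k) \<Rightarrow> ('k \<Rightarrow> 'k) \<Rightarrow> 'k"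
    and star :: "(('k \<Rightarrow> 'k) \<Rightarrow> 'k) \<Rightarrow> (('k \<Rightarrow> 'k) \<Rightarrow> 'k)"
  assumes "galois_group G"
    and "normalized_cocycle G \<Phi>"
    and "is_division_cp G \<Phi>"
    and "is_involution_cp G \<Phi> star"
    and "\<forall>k. star (cp_emb k) \<in> range cp_emb"
  shows "(formally_real_mat G \<Phi> star \<longleftrightarrow>
           (formally_real_cp G \<Phi> star \<and> (\<forall>k. \<forall>\<sigma>\<in>G. \<sigma> (kstar star k) = kstar star (\<sigma> k))))
       \<and> ((formally_real_cp G \<Phi> star \<and> (\<forall>k. \<forall>\<sigma>\<in>G. \<sigma> (kstar star k) = kstar star (\<sigma> k))) \<longleftrightarrow>
           ((\<forall>\<sigma>\<in>G. cp_mult G \<Phi> (star (cp_basis \<sigma>)) (cp_basis \<sigma>) \<in> range cp_emb)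
            \<and> (\<exists>M. herm_cone (kstar star) M
                   \<and> (\<forall>\<sigma>\<in>G. cp_f (cp_mult G \<Phi> (star (cp_basis \<sigma>)) (cp_basis \<sigma>)) \<in> M))))"
proof -
  interpret crossed_product G \<Phi> star
    using assms by (simp add: crossed_product_def)
  show ?thesis
    using formally_real_mat_iff formally_real_cp_iff norm_cone_condition_iff
    unfolding compatible_def by blast
qed

end
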